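(* Let $A \subset \mathbb{Z}^d$ be a finite set such that $A - A$ generates $\mathbb{Z}^d$ additively and such that its convex hull $\Delta_A$ is a $d$-dimensional simplex. Denote by $v_1, \ldots, v_{d+1}$ the vertices of $\Delta_A$, and for each $i$ let \[ T_i(A) = \bigcup_{k \geq 0} k(A - v_i), \] where $A - v_i = \{a - v_i : a \in A\}$. Then for all integers $h \geq 0$ with $h \geq \mathrm{vol}(\Delta_A)\cdot (d+1)! - 2 - 2d$ we have \[ hA = \bigcap_{i=1}^{d+1} \big( h v_i + T_i(A) \big). \]
   Context: For a finite set $B \subset \mathbb{Z}^d$ and integer $k \geq 0$, $kB = \{b_1 + \cdots + b_k : b_i \in B\}$, with $0B = \{0\}$. $\mathrm{vol}(\Delta_A)$ is the $d$-dimensional Lebesgue volume of the convex hull of $A$. For a set $S$ and vector $x$, $x + S = \{x + s : s \in S\}$. *)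

theory Defs
  imports "HOL-Analysis.Analysis"
begin

fun sumset :: "nat \<Rightarrow> 'a::monoid_add set \<Rightarrow> 'a set" where
  "sumset 0 B = {0}"
| "sumset (Suc k) B = {x + b | x b. x \<in> sumset k B \<and> b \<in> B}"

definition int_lattice :: "(real ^ 'n) set" where
  "int_lattice = {x. \<forall>i. x $ i \<in> \<int>}"

definition int_span :: "'a::real_vector set \<Rightarrow> 'a set" where
  "int_span S = {\<Sum>s\<in>F. of_int (c s) *\<^sub>R s | F c. finite F \<and> F \<subseteq> S}"

definition T_cone :: "'a::ab_group_add set \<Rightarrow> 'a \<Rightarrow> 'a set" where
  "T_cone A v = (\<Union>k. sumset k ((\<lambda>a. a - v) ` A))"

end

theory Submission
  imports Defs
begin

text \<open>In homogeneous barycentric coordinates with respect to the vertex set C, normalised so that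
  the coordinates of a point of kA are nonnegative and sum to k, x lies in every h v + T_v(A) iff
  for each vertex c some x + m c lies in (h + m)A. The fractional parts of the coordinates of a
  point of kA determine a lattice point of the half-open parallelepiped spanned by the edges at
  one vertex; there are at most d! vol(Delta_A) of these, so by pigeonhole on partial sums every
  point of kA is r + (sum of n_c c) with r in jA, j < d! vol(Delta_A) and natural n_c. For the
  points x + m c, either one of these r extends to x inside hA, or all diagonal coordinates of
  the r exceed those of x by at least one; unless x is itself an integral combination of the
  vertices, some off-diagonal coordinate is positive too, and summing over the vertices gives
  h < (d + 1)! vol(Delta_A) - 2(d + 1).\<close>

subsection \<open>Sumsets and the integer lattice\<close>

lemma sumset_SucI: "x \<in> sumset k B \<Longrightarrow> b \<in> B \<Longrightarrow> x + b \<in> sumset (Suc k) B"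
  by auto

lemma sumset_add:
  fixes B :: "'a::comm_monoid_add set"
  assumes "x \<in> sumset m B" "y \<in> sumset n B"
  shows "x + y \<in> sumset (m + n) B"
  using assms(2)
proof (induction n arbitrary: y)
  case 0
  then show ?case using assms(1) by simp
next
  case (Suc n)
  then obtain z b where "y = z + b" "z \<in> sumset n B" "b \<in> B" by auto
  with Suc.IH have "(x + z) + b \<in> sumset (Suc (m + n)) B" by (blast intro: sumset_SucI)
  then show ?case using \<open>y = z + b\<close> by (simp add: add.assoc)
qed

lemma sum_mem_sumset:
  fixes a :: "'i \<Rightarrow> 'a::comm_monoid_add"
  assumes "finite I" "\<And>i. i \<in> I \<Longrightarrow> a i \<in> B"
  shows "sum a I \<in> sumset (card I) B"
  using assms
proof (induction I rule: finite_induct)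
  case (insert i I)
  then have "sum a I + a i \<in> sumset (Suc (card I)) B" by (intro sumset_SucI) auto
  then show ?case using insert by (simp add: add.commute)
qed simp

lemma mem_sumset_iff_sum:
  fixes B :: "'a::comm_monoid_add set"
  shows "y \<in> sumset k B \<longleftrightarrow> (\<exists>a. (\<forall>i<k. a i \<in> B) \<and> y = (\<Sum>i<k. a i))"
proof
  show "y \<in> sumset k B \<Longrightarrow> \<exists>a. (\<forall>i<k. a i \<in> B) \<and> y = (\<Sum>i<k. a i)"
  proof (induction k arbitrary: y)
    case (Suc k)
    then obtain z b where y: "y = z + b" "z \<in> sumset k B" "b \<in> B" by auto
    then obtain a where a: "\<forall>i<k. a i \<in> B" "z = (\<Sum>i<k. a i)" using Suc.IH by blast
    have "(\<Sum>i<k. (a(k := b)) i) = z" unfolding a(2) by (intro sum.cong) auto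
    then have "y = (\<Sum>i<Suc k. (a(k := b)) i)" using y(1) by simp
    moreover have "\<forall>i<Suc k. (a(k := b)) i \<in> B" using a(1) y(3) by (auto simp: less_Suc_eq)
    ultimately show ?case by blast
  qed simp
  show "\<exists>a. (\<forall>i<k. a i \<in> B) \<and> y = (\<Sum>i<k. a i) \<Longrightarrow> y \<in> sumset k B"
    using sum_mem_sumset[of "{..<k}" _ B] by auto
qed

lemma of_nat_scaleR_mem_sumset:
  fixes c :: "'a::real_vector"
  assumes "c \<in> B"
  shows "real m *\<^sub>R c \<in> sumset m B"
  using sum_mem_sumset[of "{..<m}" "\<lambda>_. c" B] assms by (simp add: sum_constant_scale)

lemma sum_of_nat_scaleR_mem_sumset:
  fixes C :: "'a::real_vector set"
  assumes "finite C" "C \<subseteq> B"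
  shows "(\<Sum>c\<in>C. real (n c) *\<^sub>R c) \<in> sumset (sum n C) B"
  using assms
proof (induction C rule: finite_induct)
  case (insert c C)
  then have "real (n c) *\<^sub>R c + (\<Sum>c\<in>C. real (n c) *\<^sub>R c) \<in> sumset (n c + sum n C) B"
    by (intro sumset_add of_nat_scaleR_mem_sumset) auto
  then show ?case using insert by simp
qed simp

lemma sumset_translate:
  fixes A :: "'a::real_vector set"
  shows "sumset k ((+) t ` A) = (+) (real k *\<^sub>R t) ` sumset k A"
proof (induction k)
  case (Suc k)
  show ?case
  proof (intro set_eqI iffI)
    fix x assume "x \<in> sumset (Suc k) ((+) t ` A)"
    then obtain y a where x: "x = y + (t + a)" "y \<in> sumset k ((+) t ` A)" "a \<in> A" by auto
    with Suc.IH obtain z where z: "y = real k *\<^sub>R t + z" "z \<in> sumset k A" by auto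
    have "x = real (Suc k) *\<^sub>R t + (z + a)" by (simp add: x z algebra_simps)
    moreover have "z + a \<in> sumset (Suc k) A" using z(2) x(3) by (rule sumset_SucI)
    ultimately show "x \<in> (+) (real (Suc k) *\<^sub>R t) ` sumset (Suc k) A" by blast
  next
    fix x assume "x \<in> (+) (real (Suc k) *\<^sub>R t) ` sumset (Suc k) A"
    then obtain z a where x: "x = real (Suc k) *\<^sub>R t + (z + a)" "z \<in> sumset k A" "a \<in> A"
      by auto
    with Suc.IH have "(real k *\<^sub>R t + z) + (t + a) \<in> sumset (Suc k) ((+) t ` A)"
      by (intro sumset_SucI) auto
    moreover have "(real k *\<^sub>R t + z) + (t + a) = x" by (simp add: x algebra_simps)
    ultimately show "x \<in> sumset (Suc k) ((+) t ` A)" by simp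
  qed
qed simp

lemma mem_T_cone_iff:
  fixes A :: "'a::real_vector set"
  shows "t \<in> T_cone A v \<longleftrightarrow> (\<exists>k. t + real k *\<^sub>R v \<in> sumset k A)"
proof -
  have shift: "sumset k ((\<lambda>a. a - v) ` A) = (\<lambda>x. x - real k *\<^sub>R v) ` sumset k A" for k
    using sumset_translate[of k "- v" A] by simp
  have mem: "t \<in> (\<lambda>x. x - c) ` S \<longleftrightarrow> t + c \<in> S" for c and S :: "'a set"
  proof
    assume "t + c \<in> S"
    then have "(t + c) - c \<in> (\<lambda>x. x - c) ` S" by (rule imageI)
    then show "t \<in> (\<lambda>x. x - c) ` S" by simp
  qed auto
  show ?thesis unfolding T_cone_def UN_iff by (simp only: shift mem) simp
qed

lemma sumset_subset_translated_T_cone: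
  fixes A :: "'a::real_vector set"
  shows "sumset h A \<subseteq> (\<lambda>t. real h *\<^sub>R v + t) ` T_cone A v"
proof
  fix x assume "x \<in> sumset h A"
  then have "x - real h *\<^sub>R v \<in> T_cone A v"
    unfolding mem_T_cone_iff by (intro exI[of _ h]) simp
  then show "x \<in> (\<lambda>t. real h *\<^sub>R v + t) ` T_cone A v" by force
qed

lemma mem_translated_T_cone_imp:
  fixes A :: "'a::real_vector set"
  assumes "v \<in> A" and "x \<in> (\<lambda>t. real h *\<^sub>R v + t) ` T_cone A v"
  shows "\<exists>m. x + real m *\<^sub>R v \<in> sumset (h + m) A"
proof -
  obtain t k where x: "x = real h *\<^sub>R v + t" and t: "t + real k *\<^sub>R v \<in> sumset k A"
    using assms(2) by (auto simp: mem_T_cone_iff)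
  show ?thesis
  proof (cases "h \<le> k")
    case True
    then have "x + real (k - h) *\<^sub>R v = t + real k *\<^sub>R v"
      by (simp add: x of_nat_diff algebra_simps)
    with t True show ?thesis by (intro exI[of _ "k - h"]) simp
  next
    case False
    have "(t + real k *\<^sub>R v) + real (h - k) *\<^sub>R v \<in> sumset (k + (h - k)) A"
      using t assms(1) by (intro sumset_add of_nat_scaleR_mem_sumset)
    moreover have "(t + real k *\<^sub>R v) + real (h - k) *\<^sub>R v = x"
      using False by (simp add: x of_nat_diff algebra_simps)
    ultimately show ?thesis using False by (intro exI[of _ 0]) simp
  qed
qed

lemma int_lattice_add: "x \<in> int_lattice \<Longrightarrow> y \<in> int_lattice \<Longrightarrow> x + y \<in> int_lattice"
  and int_lattice_diff: "x \<in> int_lattice \<Longrightarrow> y \<in> int_lattice \<Longrightarrow> x - y \<in> int_lattice"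
  and int_lattice_scaleR: "r \<in> \<int> \<Longrightarrow> x \<in> int_lattice \<Longrightarrow> r *\<^sub>R x \<in> int_lattice"
  and int_lattice_zero: "0 \<in> int_lattice"
  by (auto simp: int_lattice_def)

lemma int_lattice_sum: "(\<And>i. i \<in> I \<Longrightarrow> x i \<in> int_lattice) \<Longrightarrow> sum x I \<in> int_lattice"
  by (induction I rule: infinite_finite_induct) (auto simp: int_lattice_zero int_lattice_add)

lemma sumset_subset_int_lattice: "A \<subseteq> int_lattice \<Longrightarrow> sumset k A \<subseteq> int_lattice"
  by (induction k) (auto intro!: int_lattice_add simp: int_lattice_zero)

lemma int_lattice_eqI:
  assumes "x \<in> int_lattice" "y \<in> int_lattice" "\<And>i. \<bar>x $ i - y $ i\<bar> < 1"
  shows "x = y"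
proof -
  have "x $ i - y $ i \<in> \<int>" for i using assms(1,2) by (auto simp: int_lattice_def)
  then have "x $ i - y $ i = 0" for i by (meson Ints_nonzero_abs_ge1 assms(3) not_le)
  then show ?thesis by (simp add: vec_eq_iff)
qed

lemma countable_int_lattice: "countable (int_lattice :: (real^'n::finite) set)"
proof -
  have "int_lattice = range (\<lambda>k::'n \<Rightarrow> int. \<chi> i. (of_int (k i) :: real))"
  proof (intro set_eqI iffI)
    fix x :: "real^'n" assume "x \<in> int_lattice"
    then have "\<forall>i. \<exists>m. x $ i = of_int m" by (auto simp: int_lattice_def elim!: Ints_cases)
    then obtain k where "\<forall>i. x $ i = of_int (k i)" by metis
    then show "x \<in> range (\<lambda>k::'n \<Rightarrow> int. \<chi> i. (of_int (k i) :: real))"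
      by (auto simp: vec_eq_iff intro!: image_eqI[of _ _ k])
  qed (auto simp: int_lattice_def)
  moreover have "countable (UNIV :: ('n \<Rightarrow> int) set)" by (rule countableI_type)
  ultimately show ?thesis by (metis countable_image)
qed

definition half_open_unit_cube :: "(real^'n::finite) set" where
  "half_open_unit_cube = {s. \<forall>i. 0 \<le> s $ i \<and> s $ i < 1}"

lemma half_open_unit_cube_eqI:
  assumes "s \<in> half_open_unit_cube" "s' \<in> half_open_unit_cube" "s - s' \<in> int_lattice"
  shows "s = s'"
proof -
  have "\<bar>(s - s') $ i - 0 $ i\<bar> < 1" for i
  proof -
    have "0 \<le> s $ i" "s $ i < 1" "0 \<le> s' $ i" "s' $ i < 1"
      using assms(1,2) by (auto simp: half_open_unit_cube_def)
    then show ?thesis by (simp add: abs_less_iff)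
  qed
  then have "s - s' = 0" using int_lattice_eqI[OF assms(3) int_lattice_zero] by blast
  then show ?thesis by simp
qed

lemma floor_decomposition:
  fixes x :: "real^'n::finite"
  defines "k \<equiv> \<chi> i. of_int \<lfloor>x $ i\<rfloor>"
  shows "k \<in> int_lattice" and "x - k \<in> half_open_unit_cube"
  by (auto simp: k_def int_lattice_def half_open_unit_cube_def) linarith

lemma sum_Basis_vec_nth [simp]: "(\<Sum>b\<in>(Basis :: (real^'n::finite) set). b $ i) = 1"
proof -
  have "(One :: real^'n) $ i = 1" by (simp add: cart_eq_inner_axis inner_sum_left inner_Basis)
  then show ?thesis by simp
qed

subsection \<open>Lebesgue measure under linear maps\<close>

text \<open>The change of variables formula of the library is stated only for index types of class
  wellorder; an arbitrary finite index type is transported to a wellordered copy.\<close>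

typedef 'a ordered = "UNIV :: 'a set" by auto

definition nat_index :: "'a::finite \<Rightarrow> nat" where
  "nat_index = (SOME f. inj f)"

lemma inj_nat_index: "inj (nat_index :: 'a::finite \<Rightarrow> nat)"
proof -
  obtain f :: "'a \<Rightarrow> nat" and n where "inj_on f UNIV"
    using finite_imp_inj_to_nat_seg[OF finite[of "UNIV::'a set"]] by blast
  then show ?thesis unfolding nat_index_def by (rule someI[where P = inj])
qed

instance ordered :: (finite) finite
proof
  have "(UNIV :: 'a ordered set) = Abs_ordered ` UNIV" by (metis Abs_ordered_cases surj_def)
  then show "finite (UNIV :: 'a ordered set)" by (metis finite finite_imageI)
qed

instantiation ordered :: (finite) linorder
begin
definition "x \<le> y \<longleftrightarrow> nat_index (Rep_ordered x) \<le> nat_index (Rep_ordered y)"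
definition "x < y \<longleftrightarrow> nat_index (Rep_ordered x) < nat_index (Rep_ordered y)"
instance
proof
  fix x y :: "'a ordered"
  show "x \<le> y \<Longrightarrow> y \<le> x \<Longrightarrow> x = y"
    using inj_nat_index[where 'a='a] by (simp add: less_eq_ordered_def inj_eq Rep_ordered_inject)
qed (auto simp: less_eq_ordered_def less_ordered_def)
end

instance ordered :: (finite) wellorder
proof
  fix P :: "'a ordered \<Rightarrow> bool" and a
  assume step: "\<And>x. (\<And>y. y < x \<Longrightarrow> P y) \<Longrightarrow> P x"
  have "\<forall>x. nat_index (Rep_ordered x) = n \<longrightarrow> P x" for n
    by (induction n rule: less_induct) (use step in \<open>auto simp: less_ordered_def\<close>)
  then show "P a" by blast
qed

definition to_ordered :: "real^'n::finite \<Rightarrow> real^('n ordered)" where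
  "to_ordered x = (\<chi> j. x $ Rep_ordered j)"

definition from_ordered :: "real^('n::finite ordered) \<Rightarrow> real^'n" where
  "from_ordered y = (\<chi> i. y $ Abs_ordered i)"

lemma from_to_ordered [simp]: "from_ordered (to_ordered x) = x"
  by (simp add: to_ordered_def from_ordered_def Abs_ordered_inverse vec_eq_iff)

lemma to_from_ordered [simp]: "to_ordered (from_ordered y) = y"
  by (simp add: to_ordered_def from_ordered_def Rep_ordered_inverse vec_eq_iff)

lemma linear_to_ordered: "linear to_ordered"
  and linear_from_ordered: "linear from_ordered"
  by (auto simp: linear_iff to_ordered_def from_ordered_def vec_eq_iff)

lemma borel_measurable_from_ordered: "from_ordered \<in> borel_measurable borel"
  using linear_from_ordered
  by (intro borel_measurable_continuous_onI linear_continuous_on)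
     (simp add: linear_conv_bounded_linear)

lemma prod_inner_Basis_cart:
  "(\<Prod>b\<in>(Basis::(real^'k::finite) set). x \<bullet> b) = (\<Prod>i\<in>UNIV. x $ i)"
proof -
  have "(Basis::(real^'k) set) = (\<lambda>i. axis i 1) ` UNIV" by (auto simp: Basis_vec_def)
  then have "(\<Prod>b\<in>(Basis::(real^'k) set). x \<bullet> b) = (\<Prod>b\<in>(\<lambda>i. axis i 1) ` UNIV. x \<bullet> b)"
    by (simp only:)
  also have "\<dots> = (\<Prod>i\<in>UNIV. x \<bullet> axis i 1)"
    by (subst prod.reindex) (auto simp: inj_def axis_eq_axis)
  finally show ?thesis by (simp add: cart_eq_inner_axis)
qed

lemma all_Rep_ordered_iff: "(\<forall>j. P (Rep_ordered j)) \<longleftrightarrow> (\<forall>i. P i)"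
  by (metis Abs_ordered_inverse UNIV_I)

lemma prod_Rep_ordered:
  fixes f :: "'a \<Rightarrow> 'b::comm_monoid_mult"
  shows "(\<Prod>j\<in>UNIV. f (Rep_ordered j)) = (\<Prod>i\<in>UNIV. f i)"
proof -
  have "bij_betw Rep_ordered UNIV (UNIV :: 'a set)"
    by (metis bij_betw_def inj_def Rep_ordered_inject type_definition.Rep_range
        type_definition_ordered)
  from prod.reindex_bij_betw[OF this] show ?thesis .
qed

lemma lborel_eq_distr_from_ordered:
  "lborel = distr lborel borel (from_ordered :: real^('n::finite ordered) \<Rightarrow> real^'n)"
proof (rule lborel_eqI)
  fix l u :: "real^'n"
  assume le: "\<And>b. b \<in> Basis \<Longrightarrow> l \<bullet> b \<le> u \<bullet> b"
  have "l $ i \<le> u $ i" for i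
    using le[of "axis i 1"] by (simp add: cart_eq_inner_axis)
  then have le_ordered: "to_ordered l \<bullet> b \<le> to_ordered u \<bullet> b" if "b \<in> Basis" for b
    using that by (auto simp: Basis_vec_def cart_eq_inner_axis[symmetric] to_ordered_def)
  have "from_ordered -` box l u = box (to_ordered l) (to_ordered u)"
  proof (intro set_eqI)
    fix x :: "real^('n ordered)"
    have "x \<in> from_ordered -` box l u
        \<longleftrightarrow> (\<forall>i. l $ i < x $ Abs_ordered i \<and> x $ Abs_ordered i < u $ i)"
      by (simp add: mem_box_cart from_ordered_def)
    also have "\<dots> \<longleftrightarrow> (\<forall>j. l $ Rep_ordered j < x $ j \<and> x $ j < u $ Rep_ordered j)"
      by (subst all_Rep_ordered_iff[symmetric]) (simp add: Rep_ordered_inverse)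
    also have "\<dots> \<longleftrightarrow> x \<in> box (to_ordered l) (to_ordered u)"
      by (simp add: mem_box_cart to_ordered_def)
    finally show "x \<in> from_ordered -` box l u \<longleftrightarrow> x \<in> box (to_ordered l) (to_ordered u)" .
  qed
  then have "emeasure (distr lborel borel from_ordered) (box l u)
      = emeasure lborel (box (to_ordered l) (to_ordered u))"
    using borel_measurable_from_ordered by (subst emeasure_distr) auto
  also have "\<dots> = (\<Prod>j\<in>UNIV. (u - l) $ Rep_ordered j)"
    using le_ordered by (simp add: emeasure_lborel_box prod_inner_Basis_cart to_ordered_def)
  finally show "emeasure (distr lborel borel from_ordered) (box l u) = (\<Prod>b\<in>Basis. (u - l) \<bullet> b)"
    by (simp add: prod_Rep_ordered[of "\<lambda>i. u $ i - l $ i"] prod_inner_Basis_cart)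
qed simp

lemma measure_to_ordered_image:
  fixes S :: "(real^'n::finite) set"
  assumes "S \<in> sets borel"
  shows "measure lebesgue (to_ordered ` S) = measure lebesgue S"
proof -
  have pre: "from_ordered -` S = to_ordered ` S"
    by (auto simp: image_iff) (metis to_from_ordered)
  then have "to_ordered ` S \<in> sets borel"
    using measurable_sets_borel[OF borel_measurable_from_ordered assms] by simp
  then have "measure lebesgue (to_ordered ` S) = measure lborel (from_ordered -` S)"
    by (simp add: pre)
  also have "\<dots> = measure (distr lborel borel from_ordered) S"
    using borel_measurable_from_ordered assms by (subst measure_distr) auto
  also have "\<dots> = measure lebesgue S"
    using assms by (simp flip: lborel_eq_distr_from_ordered)
  finally show ?thesis .
qed

lemma linear_image_measure_proportional:
  fixes f :: "real^'n::finite \<Rightarrow> real^'n"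
  assumes "linear f"
  obtains \<kappa> where "\<And>S. compact S \<Longrightarrow> measure lebesgue (f ` S) = \<kappa> * measure lebesgue S"
proof -
  define g where "g = to_ordered \<circ> f \<circ> from_ordered"
  have "linear g"
    unfolding g_def using assms linear_to_ordered linear_from_ordered by (intro linear_compose)
  have "measure lebesgue (f ` S) = \<bar>det (matrix g)\<bar> * measure lebesgue S"
    if S: "compact S" for S :: "(real^'n) set"
  proof -
    have "compact (f ` S)"
      using S assms by (intro compact_continuous_image linear_continuous_on)
         (simp_all add: linear_conv_bounded_linear)
    have "compact (to_ordered ` S)"
      using S linear_to_ordered by (intro compact_continuous_image linear_continuous_on)
         (simp_all add: linear_conv_bounded_linear)
    have "to_ordered ` f ` S = g ` to_ordered ` S" by (auto simp: g_def image_comp)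
    have "measure lebesgue (f ` S) = measure lebesgue (to_ordered ` f ` S)"
      using \<open>compact (f ` S)\<close>
      by (simp add: measure_to_ordered_image compact_imp_closed borel_closed)
    also have "\<dots> = \<bar>det (matrix g)\<bar> * measure lebesgue (to_ordered ` S)"
      unfolding \<open>to_ordered ` f ` S = g ` to_ordered ` S\<close>
      using \<open>linear g\<close> \<open>compact (to_ordered ` S)\<close>
      by (intro measure_linear_image lmeasurable_compact)
    also have "measure lebesgue (to_ordered ` S) = measure lebesgue S"
      using S by (simp add: measure_to_ordered_image compact_imp_closed borel_closed)
    finally show ?thesis .
  qed
  then show ?thesis by (rule that)
qed

lemma measure_linear_image_unit_cube:
  fixes f :: "real^'n::finite \<Rightarrow> real^'n"
  assumes "linear f"
  shows "measure lebesgue (f ` cbox 0 One)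
    = fact CARD('n) * measure lebesgue (f ` (convex hull (insert 0 Basis)))"
proof -
  obtain \<kappa> where \<kappa>: "\<And>S. compact S \<Longrightarrow> measure lebesgue (f ` S) = \<kappa> * measure lebesgue S"
    using linear_image_measure_proportional[OF assms] by blast
  have "compact (convex hull (insert 0 (Basis :: (real^'n) set)))"
    by (intro finite_imp_compact_convex_hull) auto
  then have "measure lebesgue (convex hull (insert 0 (Basis :: (real^'n) set))) = 1 / fact CARD('n)"
    by (simp add: compact_imp_closed borel_closed content_std_simplex)
  moreover have "measure lebesgue (cbox 0 (One :: real^'n)) = 1"
    by (simp add: content_cbox_cart)
  ultimately show ?thesis
    using \<kappa>[of "cbox 0 One"] \<kappa>[of "convex hull (insert 0 Basis)"] \<open>compact (convex hull _)\<close>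
    by simp
qed

lemma measure_edge_parallelepiped:
  fixes f :: "real^'n::finite \<Rightarrow> real^'n"
  assumes "linear f" "v \<in> C" "f ` Basis = (\<lambda>c. c - v) ` (C - {v})"
  shows "measure lebesgue (f ` cbox 0 One) = fact CARD('n) * measure lebesgue (convex hull C)"
proof -
  have "f ` insert 0 Basis = (+) (- v) ` C"
    using assms by (auto simp: linear_0)
  then have "f ` (convex hull (insert 0 Basis)) = convex hull ((+) (- v) ` C)"
    by (simp only: convex_hull_linear_image[OF assms(1)])
  also have "\<dots> = (+) (- v) ` (convex hull C)" by (rule convex_hull_translation)
  finally show ?thesis
    using measure_linear_image_unit_cube[OF assms(1)] measure_translation[of "- v"] by simp
qed

subsection \<open>Counting lattice points in a parallelepiped\<close>

lemma emeasure_lborel_vimage_translation: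
  fixes S :: "'a::euclidean_space set"
  assumes "S \<in> sets borel"
  shows "emeasure lborel ((+) l -` S) = emeasure lborel S"
proof -
  have "emeasure lborel S = emeasure (distr lborel borel ((+) l)) S"
    by (simp add: lborel_distr_plus)
  also have "\<dots> = emeasure lborel ((+) l -` S)"
    using assms by (subst emeasure_distr) auto
  finally show ?thesis by simp
qed

lemma emeasure_le_if_translates_disjoint:
  fixes X P :: "'a::euclidean_space set"
  assumes "countable L" "X \<in> sets borel" "P \<in> sets borel"
    and cover: "\<And>z. z \<in> X \<Longrightarrow> \<exists>l\<in>L. z - l \<in> P"
    and disjoint_tiles: "disjoint_family_on (\<lambda>l. (\<lambda>z. z - l) -` P) L"
    and disjoint_pieces: "disjoint_family_on (\<lambda>l. (+) l -` X \<inter> P) L"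
  shows "emeasure lborel X \<le> emeasure lborel P"
proof -
  define piece where "piece l = X \<inter> (\<lambda>z. z - l) -` P" for l
  have piece_borel: "piece l \<in> sets borel" for l
    using assms(2,3) by (simp add: piece_def)
  have piece_back: "(+) l -` piece l = (+) l -` X \<inter> P" for l
    by (auto simp: piece_def)
  have "X = (\<Union>l\<in>L. piece l)" using cover by (auto simp: piece_def)
  moreover have "disjoint_family_on piece L"
    using disjoint_tiles unfolding disjoint_family_on_def piece_def by blast
  ultimately have "emeasure lborel X = (\<integral>\<^sup>+l. emeasure lborel (piece l) \<partial>count_space L)"
    using assms(1) piece_borel by (simp add: emeasure_UN_countable)
  also have "\<dots> = (\<integral>\<^sup>+l. emeasure lborel ((+) l -` X \<inter> P) \<partial>count_space L)"
    by (simp flip: piece_back add: emeasure_lborel_vimage_translation piece_borel)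
  also have "\<dots> = emeasure lborel (\<Union>l\<in>L. (+) l -` X \<inter> P)"
    using assms(1-3) disjoint_pieces by (intro emeasure_UN_countable[symmetric]) auto
  also have "\<dots> \<le> emeasure lborel P"
    using assms(3) by (intro emeasure_mono) auto
  finally show ?thesis .
qed

lemma half_open_unit_cube_lattice_unique:
  assumes "s \<in> half_open_unit_cube" "s' \<in> half_open_unit_cube"
    and "k \<in> int_lattice" "k' \<in> int_lattice" "s + k = s' + k'"
  shows "k = k'"
proof -
  have "s - s' = (s + k) - (s' + k') + (k' - k)" by (simp add: algebra_simps)
  then have "s - s' = k' - k" using assms(5) by simp
  then have "s = s'" using assms by (intro half_open_unit_cube_eqI) (auto intro: int_lattice_diff)
  then show ?thesis using assms(5) by simp
qed

lemma emeasure_unit_boxes_at_lattice_points: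
  assumes "finite Q" "Q \<subseteq> int_lattice"
  shows "emeasure lborel (\<Union>q\<in>Q. box q (q + One)) = real (card Q)"
proof -
  have "disjoint_family_on (\<lambda>q. box q (q + One)) Q"
    unfolding disjoint_family_on_def
  proof (intro ballI impI)
    fix q q' assume qq: "q \<in> Q" "q' \<in> Q" "q \<noteq> q'"
    show "box q (q + One) \<inter> box q' (q' + One) = {}"
    proof (rule equals0I)
      fix z assume z: "z \<in> box q (q + One) \<inter> box q' (q' + One)"
      have "\<bar>q $ i - q' $ i\<bar> < 1" for i
        using z by (auto simp: mem_box_cart abs_less_iff dest!: spec[of _ i])
      then show False using int_lattice_eqI qq assms(2) by blast
    qed
  qed
  then have "emeasure lborel (\<Union>q\<in>Q. box q (q + One))
      = (\<integral>\<^sup>+q. emeasure lborel (box q (q + One)) \<partial>count_space Q)"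
    using assms(1) by (intro emeasure_UN_countable) (auto simp: countable_finite)
  also have "\<dots> = real (card Q)"
    using assms(1) by (simp add: emeasure_lborel_box_eq inner_simps nn_integral_count_space_finite
        ennreal_of_nat_eq_real_of_nat)
  finally show ?thesis .
qed

lemma parallelepiped_translates_cover:
  fixes f :: "real^'n::finite \<Rightarrow> real^'n"
  assumes "linear f" "inj f"
  shows "\<exists>k\<in>int_lattice. z - f k \<in> f ` half_open_unit_cube"
proof -
  obtain g where g: "linear g" "\<And>x. g (f x) = x" "\<And>x. f (g x) = x"
    using linear_injective_isomorphism[OF assms] by auto
  define k :: "real^'n" where "k = (\<chi> i. of_int \<lfloor>g z $ i\<rfloor>)"
  have "z - f k = f (g z - k)" using g assms(1) by (simp add: linear_diff)
  then show ?thesis using floor_decomposition[of "g z"] by (auto simp: k_def)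
qed

lemma borel_linear_image_half_open_unit_cube:
  fixes f :: "real^'n::finite \<Rightarrow> real^'n"
  assumes "linear f" "inj f"
  shows "f ` half_open_unit_cube \<in> sets borel"
proof -
  obtain g where g: "linear g" "\<And>x. g (f x) = x" "\<And>x. f (g x) = x"
    using linear_injective_isomorphism[OF assms] by auto
  have "g \<in> borel_measurable borel"
    using g(1) by (intro borel_measurable_continuous_onI linear_continuous_on)
      (simp add: linear_conv_bounded_linear)
  moreover have "half_open_unit_cube \<in> sets (borel :: (real^'n) measure)"
    unfolding half_open_unit_cube_def by measurable
  moreover have "f ` half_open_unit_cube = g -` half_open_unit_cube"
    using g by (auto simp: image_iff) metis
  ultimately show ?thesis by (simp add: measurable_sets_borel)
qed

lemma parallelepiped_translate_unique:
  assumes f: "linear f" "inj f" and "k \<in> int_lattice" "k' \<in> int_lattice"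
    and "z - f k \<in> f ` half_open_unit_cube" "z - f k' \<in> f ` half_open_unit_cube"
  shows "k = k'"
proof -
  obtain s s' where s: "s \<in> half_open_unit_cube" "s' \<in> half_open_unit_cube"
    and "z - f k = f s" "z - f k' = f s'"
    using assms(5,6) by blast
  then have "f (s + k) = f (s' + k')" using f(1) by (simp add: linear_add algebra_simps)
  then have "s + k = s' + k'" using f(2) by (simp add: inj_eq)
  then show ?thesis using half_open_unit_cube_lattice_unique s assms(3,4) by blast
qed

lemma lattice_box_translates_unique:
  assumes f: "linear f" "inj f" "f ` int_lattice \<subseteq> int_lattice"
    and k: "k \<in> int_lattice" "k' \<in> int_lattice"
    and q: "q \<in> int_lattice" "q' \<in> int_lattice" "q \<in> f ` half_open_unit_cube"
      "q' \<in> f ` half_open_unit_cube"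
    and w: "f k + w \<in> box q (q + One)" "f k' + w \<in> box q' (q' + One)"
  shows "k = k'"
proof -
  have "\<bar>(f k - q) $ i - (f k' - q') $ i\<bar> < 1" for i
    using w by (auto simp: mem_box_cart abs_less_iff dest!: spec[of _ i])
  moreover have "f k - q \<in> int_lattice" "f k' - q' \<in> int_lattice"
    using f(3) k q(1,2) by (auto intro!: int_lattice_diff)
  ultimately have "f k - q = f k' - q'" by (intro int_lattice_eqI)
  then have "(q + f k') - f k = q'" "(q + f k') - f k' = q" by (simp_all add: algebra_simps)
  then have "(q + f k') - f k \<in> f ` half_open_unit_cube" "(q + f k') - f k' \<in> f ` half_open_unit_cube"
    using q(3,4) by simp_all
  then show ?thesis by (rule parallelepiped_translate_unique[OF f(1,2) k])
qed

lemma card_lattice_points_le_measure: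
  fixes f :: "real^'n::finite \<Rightarrow> real^'n"
  assumes f: "linear f" "inj f" "f ` int_lattice \<subseteq> int_lattice"
    and Q: "finite Q" "Q \<subseteq> int_lattice" "Q \<subseteq> f ` half_open_unit_cube"
  shows "real (card Q) \<le> measure lebesgue (f ` cbox 0 One)"
proof -
  define P where "P = f ` half_open_unit_cube"
  define X where "X = (\<Union>q\<in>Q. box q (q + One))"
  have "compact (f ` cbox 0 One)"
    using f(1) by (intro compact_continuous_image linear_continuous_on)
      (simp_all add: linear_conv_bounded_linear)
  have "emeasure lborel X \<le> emeasure lborel P"
  proof (rule emeasure_le_if_translates_disjoint)
    show "countable (f ` int_lattice)" by (intro countable_image countable_int_lattice)
    show "X \<in> sets borel" unfolding X_def using Q(1) by auto
    show "P \<in> sets borel" unfolding P_def using f(1,2) by (rule borel_linear_image_half_open_unit_cube)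
    show "\<exists>l\<in>f ` int_lattice. z - l \<in> P" for z
      using parallelepiped_translates_cover[OF f(1,2)] by (auto simp: P_def)
    show "disjoint_family_on (\<lambda>l. (\<lambda>z. z - l) -` P) (f ` int_lattice)"
      unfolding disjoint_family_on_def P_def using parallelepiped_translate_unique[OF f(1,2)] by blast
    show "disjoint_family_on (\<lambda>l. (+) l -` X \<inter> P) (f ` int_lattice)"
      unfolding disjoint_family_on_def
    proof (intro ballI impI equals0I)
      fix l l' w assume "l \<in> f ` int_lattice" "l' \<in> f ` int_lattice" "l \<noteq> l'"
        and "w \<in> ((+) l -` X \<inter> P) \<inter> ((+) l' -` X \<inter> P)"
      then obtain k k' q q' where k: "l = f k" "l' = f k'" "k \<in> int_lattice" "k' \<in> int_lattice"
        and "f k + w \<in> box q (q + One)" "f k' + w \<in> box q' (q' + One)" "q \<in> Q" "q' \<in> Q"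
        by (auto simp: X_def)
      then have "k = k'" using Q(2,3) by (intro lattice_box_translates_unique[OF f]) auto
      then show False using k \<open>l \<noteq> l'\<close> by simp
    qed
  qed
  also have "emeasure lborel P \<le> emeasure lborel (f ` cbox 0 One)"
  proof (rule emeasure_mono)
    show "P \<subseteq> f ` cbox 0 One"
      unfolding P_def half_open_unit_cube_def by (auto simp: mem_box_cart less_imp_le)
    show "f ` cbox 0 One \<in> sets lborel"
      using \<open>compact (f ` cbox 0 One)\<close> by (simp add: compact_imp_closed)
  qed
  also have "\<dots> = emeasure lebesgue (f ` cbox 0 One)"
    using \<open>compact (f ` cbox 0 One)\<close> by (simp add: compact_imp_closed)
  also have "\<dots> = measure lebesgue (f ` cbox 0 One)"
    using lmeasurable_compact[OF \<open>compact (f ` cbox 0 One)\<close>] by (simp add: emeasure_eq_measure2)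
  finally show ?thesis
    using emeasure_unit_boxes_at_lattice_points[OF Q(1,2)] by (simp add: X_def ennreal_le_iff)
qed

subsection \<open>Barycentric coordinates with respect to a simplex\<close>

locale affine_basis =
  fixes C :: "(real^'n::finite) set"
  assumes finite_C: "finite C" and independent_C: "\<not> affine_dependent C"
    and card_C: "card C = Suc CARD('n)"
begin

lemma affine_hull_C: "affine hull C = UNIV"
proof -
  have "aff_dim C = int DIM(real^'n)"
    using aff_dim_affine_independent[OF independent_C] card_C by simp
  then show ?thesis using aff_dim_eq_full by blast
qed

lemma combination_unique:
  assumes "sum u C = sum u' C" "(\<Sum>c\<in>C. u c *\<^sub>R c) = (\<Sum>c\<in>C. u' c *\<^sub>R c)" "c \<in> C"
  shows "u c = u' c"
proof (rule ccontr)
  assume "u c \<noteq> u' c"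
  moreover have "sum (\<lambda>x. u x - u' x) C = 0" "(\<Sum>x\<in>C. (u x - u' x) *\<^sub>R x) = 0"
    using assms by (simp_all add: sum_subtractf scaleR_diff_left)
  ultimately have "affine_dependent C"
    using assms(3) unfolding affine_dependent_explicit_finite[OF finite_C] by force
  then show False using independent_C by simp
qed

lemma combination_exists: "\<exists>u. sum u C = k \<and> (\<Sum>c\<in>C. u c *\<^sub>R c) = x"
proof -
  obtain v where v: "v \<in> C" using card_C by fastforce
  have "x - (k - 1) *\<^sub>R v \<in> affine hull C" using affine_hull_C by simp
  then obtain u where u: "sum u C = 1" "(\<Sum>c\<in>C. u c *\<^sub>R c) = x - (k - 1) *\<^sub>R v"
    by (auto simp: affine_hull_finite[OF finite_C])
  define u' where "u' c = u c + (if c = v then k - 1 else 0)" for c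
  have "sum u' C = k" using u v finite_C by (simp add: u'_def sum.distrib)
  moreover have "(\<Sum>c\<in>C. u' c *\<^sub>R c) = x" using u v finite_C
    by (simp add: u'_def scaleR_add_left sum.distrib if_distrib[of "\<lambda>t. t *\<^sub>R _"] cong: if_cong)
  ultimately show ?thesis by blast
qed

text \<open>Homogeneous barycentric coordinates: those of x/k scaled by k, so that they add up along
  sums of points.\<close>

definition bcoord :: "real \<Rightarrow> real^'n \<Rightarrow> real^'n \<Rightarrow> real" where
  "bcoord k x = (SOME u. sum u C = k \<and> (\<Sum>c\<in>C. u c *\<^sub>R c) = x)"

lemma bcoord_sum: "sum (bcoord k x) C = k"
  and bcoord_combination: "(\<Sum>c\<in>C. bcoord k x c *\<^sub>R c) = x"
  using someI_ex[OF combination_exists[of k x]] unfolding bcoord_def by auto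

lemma bcoord_eqI: "sum u C = k \<Longrightarrow> (\<Sum>c\<in>C. u c *\<^sub>R c) = x \<Longrightarrow> c \<in> C \<Longrightarrow> bcoord k x c = u c"
  using combination_unique[of "bcoord k x" u c] bcoord_sum bcoord_combination by simp

lemma bcoord_add: "c \<in> C \<Longrightarrow> bcoord (k + l) (x + y) c = bcoord k x c + bcoord l y c"
  by (rule bcoord_eqI) (simp_all add: sum.distrib scaleR_add_left bcoord_sum bcoord_combination)

lemma bcoord_zero: "c \<in> C \<Longrightarrow> bcoord 0 0 c = 0"
  by (rule bcoord_eqI) simp_all

lemma bcoord_scaleR_vertex: "v \<in> C \<Longrightarrow> c \<in> C \<Longrightarrow> bcoord k (k *\<^sub>R v) c = (if c = v then k else 0)"
  by (rule bcoord_eqI) (simp_all add: finite_C if_distrib[of "\<lambda>t. t *\<^sub>R _"] cong: if_cong)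

lemma bcoord_nonneg_if_convex_hull:
  assumes "a \<in> convex hull C" "c \<in> C"
  shows "0 \<le> bcoord 1 a c"
proof -
  obtain u where "\<forall>x\<in>C. 0 \<le> u x" "sum u C = 1" "(\<Sum>x\<in>C. u x *\<^sub>R x) = a"
    using assms(1) by (auto simp: convex_hull_finite[OF finite_C])
  then show ?thesis using bcoord_eqI assms(2) by simp
qed

lemma bcoord_nonneg_if_sumset:
  assumes "A \<subseteq> convex hull C" "y \<in> sumset k A" "c \<in> C"
  shows "0 \<le> bcoord (real k) y c"
  using assms(2)
proof (induction k arbitrary: y)
  case 0
  then show ?case using assms(3) by (simp add: bcoord_zero)
next
  case (Suc k)
  then obtain z a where "y = z + a" "z \<in> sumset k A" "a \<in> A" by auto
  moreover have "bcoord (real (Suc k)) (z + a) c = bcoord (real k) z c + bcoord 1 a c"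
    using bcoord_add[OF assms(3)] by (simp add: add.commute)
  ultimately show ?case
    using Suc.IH bcoord_nonneg_if_convex_hull assms(1,3) by (metis add_nonneg_nonneg subsetD)
qed

lemma ex_other_vertex:
  assumes "c \<in> C"
  shows "\<exists>c'\<in>C. c' \<noteq> c"
proof (rule ccontr)
  assume "\<not> (\<exists>c'\<in>C. c' \<noteq> c)"
  then have "C \<subseteq> {c}" by blast
  then have "card C \<le> 1" using card_mono[of "{c}" C] by simp
  then show False using card_C by simp
qed

lemma edge_combination_eq_0:
  assumes "v \<in> C" "(\<Sum>c\<in>C. u c *\<^sub>R (c - v)) = 0" "c \<in> C" "c \<noteq> v"
  shows "u c = 0"
proof -
  define u' where "u' x = u x - (if x = v then sum u C else 0)" for x
  have "sum u' C = 0" using assms(1) finite_C by (simp add: u'_def sum_subtractf)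
  moreover have "(\<Sum>x\<in>C. u' x *\<^sub>R x) = (\<Sum>c\<in>C. u c *\<^sub>R (c - v))"
    using assms(1) finite_C
    by (simp add: u'_def scaleR_diff_left scaleR_diff_right sum_subtractf scaleR_sum_left
        if_distrib[of "\<lambda>t. t *\<^sub>R _"] cong: if_cong)
  ultimately have "u' c = 0" using combination_unique[of u' "\<lambda>_. 0" c] assms(2,3) by simp
  then show ?thesis using assms(4) by (simp add: u'_def)
qed

lemma mem_sumset_if_bcoord_diff_Nats:
  assumes "C \<subseteq> A" "r \<in> sumset j A"
    and "\<And>c. c \<in> C \<Longrightarrow> bcoord (real k) y c - bcoord (real j) r c \<in> \<nat>"
  shows "y \<in> sumset k A"
proof -
  have "\<forall>c\<in>C. \<exists>m. bcoord (real k) y c - bcoord (real j) r c = real m"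
    using assms(3) by (auto elim!: Nats_cases)
  then obtain n where n: "\<And>c. c \<in> C \<Longrightarrow> bcoord (real k) y c - bcoord (real j) r c = real (n c)"
    by metis
  have "real k - real j = (\<Sum>c\<in>C. bcoord (real k) y c - bcoord (real j) r c)"
    by (simp add: sum_subtractf bcoord_sum)
  also have "\<dots> = real (sum n C)" by (simp add: n)
  finally have k: "k = j + sum n C" by linarith
  have "y - r = (\<Sum>c\<in>C. (bcoord (real k) y c - bcoord (real j) r c) *\<^sub>R c)"
    by (simp add: scaleR_diff_left sum_subtractf bcoord_combination)
  also have "\<dots> = (\<Sum>c\<in>C. real (n c) *\<^sub>R c)" by (simp add: n)
  finally have "y = r + (\<Sum>c\<in>C. real (n c) *\<^sub>R c)" by (simp add: algebra_simps)
  then show ?thesis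
    using sumset_add[OF assms(2) sum_of_nat_scaleR_mem_sumset[OF finite_C assms(1)]] k by simp
qed

lemma edge_map_exists:
  assumes "v \<in> C" "C \<subseteq> int_lattice"
  obtains f :: "real^'n \<Rightarrow> real^'n"
  where "linear f" "inj f" "f ` int_lattice \<subseteq> int_lattice"
    and "\<And>t. (\<And>c. c \<in> C \<Longrightarrow> 0 \<le> t c \<and> t c < 1) \<Longrightarrow>
      (\<Sum>c\<in>C. t c *\<^sub>R (c - v)) \<in> f ` half_open_unit_cube"
    and "measure lebesgue (f ` cbox 0 One) = fact CARD('n) * measure lebesgue (convex hull C)"
proof -
  have "card (UNIV :: 'n set) = card (C - {v})" using card_C assms(1) finite_C by simp
  then obtain \<beta> where \<beta>: "bij_betw \<beta> (UNIV :: 'n set) (C - {v})"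
    using finite_same_card_bij finite_C by (metis finite finite_Diff)
  then have \<beta>_in: "\<beta> i \<in> C" "\<beta> i \<noteq> v" for i by (auto simp: bij_betw_def)
  define f where "f t = (\<Sum>i\<in>UNIV. t $ i *\<^sub>R (\<beta> i - v))" for t :: "real^'n"
  have "linear f"
    unfolding f_def by (auto simp: linear_iff sum.distrib scaleR_add_left scaleR_sum_right)
  have reindex: "(\<Sum>c\<in>C. t c *\<^sub>R (c - v)) = f (\<chi> i. t (\<beta> i))" for t
  proof -
    have "(\<Sum>c\<in>C. t c *\<^sub>R (c - v)) = (\<Sum>c\<in>C - {v}. t c *\<^sub>R (c - v))"
      using assms(1) finite_C by (simp add: sum.remove)
    also have "\<dots> = f (\<chi> i. t (\<beta> i))"
      using sum.reindex_bij_betw[OF \<beta>, of "\<lambda>c. t c *\<^sub>R (c - v)"] by (simp add: f_def)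
    finally show ?thesis .
  qed
  have "f (axis i 1) = \<beta> i - v" for i
    by (simp add: f_def axis_def if_distrib[of "\<lambda>t. t *\<^sub>R _"] cong: if_cong)
  then have "f ` Basis = (\<lambda>c. c - v) ` range \<beta>" by (auto simp: Basis_vec_def image_iff)
  also have "range \<beta> = C - {v}" using \<beta> by (simp add: bij_betw_def)
  finally have volume:
    "measure lebesgue (f ` cbox 0 One) = fact CARD('n) * measure lebesgue (convex hull C)"
    using \<open>linear f\<close> assms(1) by (intro measure_edge_parallelepiped)
  have "t = 0" if "f t = 0" for t
  proof -
    define u where "u c = (if c = v then 0 else t $ inv_into UNIV \<beta> c)" for c
    have u_\<beta>: "u (\<beta> i) = t $ i" for i
      using \<beta> \<beta>_in by (simp add: u_def bij_betw_inv_into_left)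
    then have "(\<Sum>c\<in>C. u c *\<^sub>R (c - v)) = 0" using reindex[of u] that by simp
    then have "u (\<beta> i) = 0" for i using edge_combination_eq_0[OF assms(1)] \<beta>_in by blast
    then show "t = 0" by (simp add: vec_eq_iff flip: u_\<beta>)
  qed
  then have "inj f" using \<open>linear f\<close> by (simp add: linear_injective_0)
  moreover have "f ` int_lattice \<subseteq> int_lattice"
  proof clarify
    fix k :: "real^'n" assume "k \<in> int_lattice"
    then have "k $ i \<in> \<int>" for i by (simp add: int_lattice_def)
    then show "f k \<in> int_lattice"
      unfolding f_def using assms \<beta>_in by (intro int_lattice_sum int_lattice_scaleR int_lattice_diff) auto
  qed
  moreover have "(\<Sum>c\<in>C. t c *\<^sub>R (c - v)) \<in> f ` half_open_unit_cube"
    if "\<And>c. c \<in> C \<Longrightarrow> 0 \<le> t c \<and> t c < 1" for t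
    using that \<beta>_in reindex by (auto simp: half_open_unit_cube_def)
  ultimately show ?thesis using \<open>linear f\<close> volume that by blast
qed

end

subsection \<open>Reduction modulo the edge lattice\<close>

locale lattice_simplex = affine_basis C for C :: "(real^'n::finite) set" +
  fixes v :: "real^'n" and A :: "(real^'n) set"
  assumes v_in_C: "v \<in> C" and C_subset_A: "C \<subseteq> A" and A_subset_hull: "A \<subseteq> convex hull C"
    and A_lattice: "A \<subseteq> int_lattice"
begin

text \<open>The representative of y - k v modulo the lattice spanned by the edges c - v, taken in
  their half-open fundamental parallelepiped.\<close>

definition residue :: "nat \<Rightarrow> real^'n \<Rightarrow> real^'n" where
  "residue k y = (\<Sum>c\<in>C. frac (bcoord (real k) y c) *\<^sub>R (c - v))"

definition residues :: "(real^'n) set" where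
  "residues = {residue k y | k y. y \<in> sumset k A}"

lemma residue_in_int_lattice:
  assumes "y \<in> int_lattice"
  shows "residue k y \<in> int_lattice"
proof -
  have "(\<Sum>c\<in>C. bcoord (real k) y c *\<^sub>R (c - v)) = y - real k *\<^sub>R v"
    by (simp add: scaleR_diff_right sum_subtractf bcoord_combination bcoord_sum
        flip: scaleR_sum_left)
  then have "residue k y
      = (y - real k *\<^sub>R v) - (\<Sum>c\<in>C. of_int \<lfloor>bcoord (real k) y c\<rfloor> *\<^sub>R (c - v))"
    by (simp add: residue_def frac_def scaleR_diff_left sum_subtractf)
  moreover have "v \<in> int_lattice" "C \<subseteq> int_lattice" using v_in_C C_subset_A A_lattice by auto
  ultimately show ?thesis
    using assms by (auto intro!: int_lattice_diff int_lattice_sum int_lattice_scaleR)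
qed

lemma bcoord_diff_Ints_if_residue_eq:
  assumes "residue k y = residue k' y'" "c \<in> C"
  shows "bcoord (real k) y c - bcoord (real k') y' c \<in> \<int>"
proof -
  define d where "d c = bcoord (real k) y c - bcoord (real k') y' c" for c
  have "(\<Sum>c\<in>C. (frac (bcoord (real k) y c) - frac (bcoord (real k') y' c)) *\<^sub>R (c - v)) = 0"
    using assms(1) by (simp add: residue_def scaleR_diff_left sum_subtractf)
  then have "frac (bcoord (real k) y c) = frac (bcoord (real k') y' c)" if "c \<in> C" "c \<noteq> v" for c
    using edge_combination_eq_0[OF v_in_C] that by fastforce
  moreover have "a - b \<in> \<int>" if "frac a = frac b" for a b :: real
  proof -
    have "a - b = of_int (\<lfloor>a\<rfloor> - \<lfloor>b\<rfloor>)" using that by (simp add: frac_def algebra_simps)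
    then show ?thesis by simp
  qed
  ultimately have edge: "d c \<in> \<int>" if "c \<in> C" "c \<noteq> v" for c
    using that unfolding d_def by blast
  have "sum d C = real k - real k'" by (simp add: d_def sum_subtractf bcoord_sum)
  then have "d v = (real k - real k') - sum d (C - {v})"
    using sum.remove[OF finite_C v_in_C, of d] by simp
  moreover have "sum d (C - {v}) \<in> \<int>" using edge by (intro Ints_sum) auto
  ultimately have "d v \<in> \<int>" by simp
  then show ?thesis using edge assms(2) unfolding d_def by (cases "c = v") auto
qed

lemma card_subset_residues_le:
  assumes "finite Q" "Q \<subseteq> residues"
  shows "real (card Q) \<le> fact CARD('n) * measure lebesgue (convex hull C)"
proof -
  have "C \<subseteq> int_lattice" using C_subset_A A_lattice by auto
  then obtain f :: "real^'n \<Rightarrow> real^'n" where f: "linear f" "inj f" "f ` int_lattice \<subseteq> int_lattice"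
    and box: "\<And>t. (\<And>c. c \<in> C \<Longrightarrow> 0 \<le> t c \<and> t c < 1) \<Longrightarrow>
      (\<Sum>c\<in>C. t c *\<^sub>R (c - v)) \<in> f ` half_open_unit_cube"
    and vol: "measure lebesgue (f ` cbox 0 One) = fact CARD('n) * measure lebesgue (convex hull C)"
    using edge_map_exists[OF v_in_C] by blast
  have "residues \<subseteq> int_lattice"
    using residue_in_int_lattice sumset_subset_int_lattice[OF A_lattice] by (auto simp: residues_def)
  moreover have "residues \<subseteq> f ` half_open_unit_cube"
    using box[of "\<lambda>c. frac (bcoord _ _ c)"] by (auto simp: residues_def residue_def frac_lt_1)
  ultimately show ?thesis
    using card_lattice_points_le_measure[OF f, of Q] assms vol by auto
qed

lemma finite_residues: "finite residues"
proof (rule ccontr)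
  define M where "M = fact CARD('n) * measure lebesgue (convex hull C)"
  assume "infinite residues"
  then obtain Q where "Q \<subseteq> residues" "finite Q" "card Q = nat \<lceil>M\<rceil> + 1"
    using infinite_arbitrarily_large by blast
  then have "real (nat \<lceil>M\<rceil> + 1) \<le> M" using card_subset_residues_le M_def by metis
  then show False by linarith
qed

lemma card_residues_le: "real (card residues) \<le> fact CARD('n) * measure lebesgue (convex hull C)"
  using card_subset_residues_le[OF finite_residues] by simp

text \<open>Pigeonhole on the residues of the partial sums of y: two of them agree, and the
  block of summands in between has nonnegative integral coordinates, so it can be removed.\<close>

lemma sumset_shorten:
  assumes y: "y \<in> sumset k A" and k: "card residues \<le> k"
  obtains k' y' where "k' < k" "y' \<in> sumset k' A"
    "\<And>c. c \<in> C \<Longrightarrow> bcoord (real k) y c - bcoord (real k') y' c \<in> \<nat>"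
proof -
  obtain a where a: "\<And>i. i < k \<Longrightarrow> a i \<in> A" and y_eq: "y = (\<Sum>i<k. a i)"
    using y by (auto simp: mem_sumset_iff_sum)
  define s where "s m = (\<Sum>i<m. a i)" for m
  have "residue m (s m) \<in> residues" if "m \<le> k" for m
    using that a sum_mem_sumset[of "{..<m}" a A] by (auto simp: residues_def s_def)
  then have "(\<lambda>m. residue m (s m)) ` {0..card residues} \<subseteq> residues" using k by auto
  then have "\<not> inj_on (\<lambda>m. residue m (s m)) {0..card residues}"
    using card_inj_on_le[OF _ _ finite_residues] by fastforce
  then obtain m1 m2 where m: "m1 < m2" "m2 \<le> k" "residue m1 (s m1) = residue m2 (s m2)"
    using k unfolding inj_on_def by (metis atLeastAtMost_iff le_trans linorder_neqE_nat)
  define \<sigma> where "\<sigma> = (\<Sum>i\<in>{m1..<m2}. a i)"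
  define y' where "y' = (\<Sum>i\<in>{..<k} - {m1..<m2}. a i)"
  have "\<sigma> \<in> sumset (m2 - m1) A"
    using sum_mem_sumset[of "{m1..<m2}" a A] a m by (simp add: \<sigma>_def)
  have "y' \<in> sumset (k - (m2 - m1)) A"
    using sum_mem_sumset[of "{..<k} - {m1..<m2}" a A] a m
    by (simp add: y'_def card_Diff_subset subset_eq)
  have "y = y' + \<sigma>"
    using m by (simp add: y_eq y'_def \<sigma>_def sum.subset_diff[of "{m1..<m2}" "{..<k}"] subset_eq)
  have "s m2 = s m1 + \<sigma>"
    using sum.atLeastLessThan_concat[of 0 m1 m2 a] m by (simp add: s_def \<sigma>_def atLeast0LessThan)
  show ?thesis
  proof
    show "k - (m2 - m1) < k" using m by simp
    show "y' \<in> sumset (k - (m2 - m1)) A" by fact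
    fix c assume c: "c \<in> C"
    have "bcoord (real m2) (s m2) c = bcoord (real m1) (s m1) c + bcoord (real (m2 - m1)) \<sigma> c"
      using bcoord_add[OF c, of "real m1" "real (m2 - m1)"] m \<open>s m2 = s m1 + \<sigma>\<close> by simp
    then have "bcoord (real (m2 - m1)) \<sigma> c \<in> \<int>"
      using bcoord_diff_Ints_if_residue_eq[OF m(3)[symmetric] c] by simp
    moreover have "0 \<le> bcoord (real (m2 - m1)) \<sigma> c"
      using bcoord_nonneg_if_sumset[OF A_subset_hull \<open>\<sigma> \<in> sumset (m2 - m1) A\<close> c] .
    moreover have "bcoord (real k) y c = bcoord (real (k - (m2 - m1))) y' c + bcoord (real (m2 - m1)) \<sigma> c"
      using bcoord_add[OF c, of "real (k - (m2 - m1))" "real (m2 - m1)"] m \<open>y = y' + \<sigma>\<close> by simp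
    ultimately show "bcoord (real k) y c - bcoord (real (k - (m2 - m1))) y' c \<in> \<nat>"
      by (simp add: Nats_altdef2)
  qed
qed

lemma sumset_reduction:
  assumes "y \<in> sumset k A"
  obtains j r where "j < card residues" "r \<in> sumset j A"
    "\<And>c. c \<in> C \<Longrightarrow> bcoord (real k) y c - bcoord (real j) r c \<in> \<nat>"
  using assms
proof (induction k arbitrary: y rule: less_induct)
  case (less k)
  show ?case
  proof (cases "k < card residues")
    case True
    show ?thesis by (rule less.prems(1)[OF True less.prems(2)]) simp
  next
    case False
    then have "card residues \<le> k" by simp
    then obtain k' y' where "k' < k" "y' \<in> sumset k' A"
      and y': "\<And>c. c \<in> C \<Longrightarrow> bcoord (real k) y c - bcoord (real k') y' c \<in> \<nat>"
      using sumset_shorten[OF less.prems(2)] by blast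
    show ?thesis
    proof (rule less.IH[OF \<open>k' < k\<close> _ \<open>y' \<in> sumset k' A\<close>])
      fix j r
      assume j: "j < card residues" and r_in: "r \<in> sumset j A"
        and r: "\<And>c. c \<in> C \<Longrightarrow> bcoord (real k') y' c - bcoord (real j) r c \<in> \<nat>"
      have "bcoord (real k) y c - bcoord (real j) r c \<in> \<nat>" if "c \<in> C" for c
        using Nats_add[OF y'[OF that] r[OF that]] by simp
      with j r_in show thesis by (rule less.prems(1))
    qed
  qed
qed

end

lemma sum_diagonal_less_sum:
  fixes \<rho> :: "'a \<Rightarrow> 'a \<Rightarrow> real"
  assumes "finite C" "\<And>c c'. c \<in> C \<Longrightarrow> c' \<in> C \<Longrightarrow> 0 \<le> \<rho> c c'"
    and "c1 \<in> C" "c0 \<in> C" "c1 \<noteq> c0" "0 < \<rho> c1 c0"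
  shows "(\<Sum>c\<in>C. \<rho> c c) < (\<Sum>c\<in>C. \<Sum>c'\<in>C. \<rho> c c')"
proof (rule sum_strict_mono_ex1[OF assms(1)])
  show "\<forall>c\<in>C. \<rho> c c \<le> (\<Sum>c'\<in>C. \<rho> c c')"
    using assms(1,2) by (blast intro: member_le_sum)
  have "\<rho> c1 c1 < (\<Sum>c'\<in>{c1, c0}. \<rho> c1 c')" using assms(5,6) by simp
  also have "\<dots> \<le> (\<Sum>c'\<in>C. \<rho> c1 c')"
    using assms(1-4) by (intro sum_mono2) auto
  finally show "\<exists>c\<in>C. \<rho> c c < (\<Sum>c'\<in>C. \<rho> c c')" using assms(3) by blast
qed

context lattice_simplex
begin

lemma vertex_cone_reductions:
  assumes "\<And>c. c \<in> C \<Longrightarrow> \<exists>m. x + real m *\<^sub>R c \<in> sumset (h + m) A"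
  obtains j r m where "\<And>c. c \<in> C \<Longrightarrow> j c < card residues"
    and "\<And>c. c \<in> C \<Longrightarrow> r c \<in> sumset (j c) A"
    and "\<And>c c'. c \<in> C \<Longrightarrow> c' \<in> C \<Longrightarrow> bcoord (real h) x c' + (if c' = c then real (m c) else 0)
      - bcoord (real (j c)) (r c) c' \<in> \<nat>"
proof -
  have "\<exists>m j r. j < card residues \<and> r \<in> sumset j A \<and>
      (\<forall>c'\<in>C. bcoord (real (h + m)) (x + real m *\<^sub>R c) c' - bcoord (real j) r c' \<in> \<nat>)"
    if c: "c \<in> C" for c
  proof -
    obtain m where "x + real m *\<^sub>R c \<in> sumset (h + m) A" using assms[OF c] by blast
    then obtain j r where "j < card residues" "r \<in> sumset j A"
      "\<And>c'. c' \<in> C \<Longrightarrow> bcoord (real (h + m)) (x + real m *\<^sub>R c) c' - bcoord (real j) r c' \<in> \<nat>"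
      using sumset_reduction by blast
    then show ?thesis by blast
  qed
  then obtain m j r where j: "\<And>c. c \<in> C \<Longrightarrow> j c < card residues"
    and r: "\<And>c. c \<in> C \<Longrightarrow> r c \<in> sumset (j c) A"
    and reduced: "\<And>c c'. c \<in> C \<Longrightarrow> c' \<in> C \<Longrightarrow>
      bcoord (real (h + m c)) (x + real (m c) *\<^sub>R c) c' - bcoord (real (j c)) (r c) c' \<in> \<nat>"
    by metis
  show ?thesis
  proof (rule that[OF j r])
    fix c c' assume cc: "c \<in> C" "c' \<in> C"
    have "bcoord (real (h + m c)) (x + real (m c) *\<^sub>R c) c'
        = bcoord (real h) x c' + (if c' = c then real (m c) else 0)"
      using bcoord_add[OF cc(2), of "real h" "real (m c)" x] bcoord_scaleR_vertex[OF cc] by simp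
    then show "bcoord (real h) x c' + (if c' = c then real (m c) else 0)
        - bcoord (real (j c)) (r c) c' \<in> \<nat>"
      using reduced[OF cc] by simp
  qed
qed

lemma diagonal_excess_bound:
  assumes j: "\<And>c. c \<in> C \<Longrightarrow> j c < card residues"
    and r: "\<And>c. c \<in> C \<Longrightarrow> r c \<in> sumset (j c) A"
    and above: "\<And>c. c \<in> C \<Longrightarrow> bcoord (real h) x c + 1 \<le> bcoord (real (j c)) (r c) c"
    and "c1 \<in> C" "c0 \<in> C" "c1 \<noteq> c0" "0 < bcoord (real (j c1)) (r c1) c0"
  shows "real h < real (card C) * (fact CARD('n) * measure lebesgue (convex hull C) - 2)"
proof -
  define M where "M = fact CARD('n) * measure lebesgue (convex hull C)"
  define \<rho> where "\<rho> c c' = bcoord (real (j c)) (r c) c'" for c c'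
  have "0 \<le> \<rho> c c'" if "c \<in> C" "c' \<in> C" for c c'
    unfolding \<rho>_def using bcoord_nonneg_if_sumset[OF A_subset_hull r that(2)] that(1) .
  have "real h + real (card C) = (\<Sum>c\<in>C. bcoord (real h) x c + 1)"
    by (simp add: sum.distrib bcoord_sum)
  also have "\<dots> \<le> (\<Sum>c\<in>C. \<rho> c c)" using above by (simp add: \<rho>_def sum_mono)
  also have "\<dots> < (\<Sum>c\<in>C. \<Sum>c'\<in>C. \<rho> c c')"
    using finite_C \<open>\<And>c c'. _ \<Longrightarrow> _ \<Longrightarrow> 0 \<le> \<rho> c c'\<close> assms(4-7)
    unfolding \<rho>_def by (rule sum_diagonal_less_sum)
  also have "\<dots> = (\<Sum>c\<in>C. real (j c))" by (simp add: \<rho>_def bcoord_sum)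
  also have "\<dots> \<le> (\<Sum>c\<in>C. M - 1)"
  proof (rule sum_mono)
    fix c assume "c \<in> C"
    then have "Suc (j c) \<le> card residues" using j by (simp add: Suc_le_eq)
    then have "real (j c) + 1 \<le> real (card residues)" by linarith
    then show "real (j c) \<le> M - 1" using card_residues_le by (simp add: M_def)
  qed
  finally show ?thesis by (simp add: M_def algebra_simps)
qed

lemma mem_sumset_if_integral_reductions:
  assumes "\<And>c. c \<in> C \<Longrightarrow> bcoord (real h) x c \<in> \<int>"
    and r: "\<And>c. c \<in> C \<Longrightarrow> r c \<in> sumset (j c) A"
    and "\<And>c c'. c \<in> C \<Longrightarrow> c' \<in> C \<Longrightarrow> c' \<noteq> c \<Longrightarrow>
      bcoord (real h) x c' - bcoord (real (j c)) (r c) c' \<in> \<nat>"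
  shows "x \<in> sumset h A"
proof (rule mem_sumset_if_bcoord_diff_Nats[OF C_subset_A, of 0 0])
  fix c' assume c': "c' \<in> C"
  obtain c where "c \<in> C" "c \<noteq> c'" using ex_other_vertex[OF c'] by blast
  then have "0 \<le> bcoord (real (j c)) (r c) c'" "bcoord (real (j c)) (r c) c' \<le> bcoord (real h) x c'"
    using assms(3)[of c c'] bcoord_nonneg_if_sumset[OF A_subset_hull r c'] c'
    by (simp_all add: Nats_altdef2)
  then show "bcoord (real h) x c' - bcoord (real 0) 0 c' \<in> \<nat>"
    using assms(1) c' by (simp add: bcoord_zero Nats_altdef2)
qed simp

lemma mem_sumset_if_mem_vertex_cones:
  assumes h: "real (card C) * (fact CARD('n) * measure lebesgue (convex hull C) - 2) \<le> real h"
    and cones: "\<And>c. c \<in> C \<Longrightarrow> \<exists>m. x + real m *\<^sub>R c \<in> sumset (h + m) A"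
  shows "x \<in> sumset h A"
proof (rule vertex_cone_reductions[OF cones])
  fix j r m
  assume j: "\<And>c. c \<in> C \<Longrightarrow> j c < card residues"
    and r: "\<And>c. c \<in> C \<Longrightarrow> r c \<in> sumset (j c) A"
    and diff: "\<And>c c'. c \<in> C \<Longrightarrow> c' \<in> C \<Longrightarrow> bcoord (real h) x c'
      + (if c' = c then real (m c) else 0) - bcoord (real (j c)) (r c) c' \<in> \<nat>"
  define \<mu> where "\<mu> c = bcoord (real h) x c" for c
  define \<rho> where "\<rho> c c' = bcoord (real (j c)) (r c) c'" for c c'
  have diagonal_Ints: "\<mu> c - \<rho> c c \<in> \<int>" if "c \<in> C" for c
  proof -
    have "\<mu> c + real (m c) - \<rho> c c \<in> \<int>"
      using diff[OF that that] Nats_subset_Ints by (auto simp: \<mu>_def \<rho>_def)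
    then have "(\<mu> c + real (m c) - \<rho> c c) - real (m c) \<in> \<int>" by (rule Ints_diff[OF _ Ints_of_nat])
    then show ?thesis by simp
  qed
  consider (undone) c where "c \<in> C" "\<rho> c c \<le> \<mu> c" | (above) "\<And>c. c \<in> C \<Longrightarrow> \<mu> c + 1 \<le> \<rho> c c"
  proof (cases "\<exists>c\<in>C. \<rho> c c \<le> \<mu> c")
    case False
    have "\<mu> c + 1 \<le> \<rho> c c" if "c \<in> C" for c
      using False Ints_nonzero_abs_ge1[OF diagonal_Ints[OF that]] that by fastforce
    then show ?thesis using that(2) by blast
  qed (use that(1) in blast)
  then show "x \<in> sumset h A"
  proof cases
    case undone
    have "\<mu> c' - \<rho> c c' \<in> \<nat>" if "c' \<in> C" for c'
      using diff[OF undone(1) that] diagonal_Ints[OF undone(1)] undone(2)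
      by (cases "c' = c") (auto simp: Nats_altdef2 \<mu>_def \<rho>_def)
    then show ?thesis
      using mem_sumset_if_bcoord_diff_Nats[OF C_subset_A r[OF undone(1)]] by (simp add: \<mu>_def \<rho>_def)
  next
    case above
    show ?thesis
    proof (cases "\<forall>c\<in>C. \<mu> c \<in> \<int>")
      case True
      show ?thesis
      proof (rule mem_sumset_if_integral_reductions[OF _ r])
        show "bcoord (real h) x c \<in> \<int>" if "c \<in> C" for c using True that by (simp add: \<mu>_def)
        show "bcoord (real h) x c' - bcoord (real (j c)) (r c) c' \<in> \<nat>"
          if "c \<in> C" "c' \<in> C" "c' \<noteq> c" for c c'
          using diff[OF that(1,2)] that(3) by simp
      qed
    next
      case False
      then obtain c0 where c0: "c0 \<in> C" "\<mu> c0 \<notin> \<int>" by blast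
      obtain c1 where c1: "c1 \<in> C" "c1 \<noteq> c0" using ex_other_vertex[OF c0(1)] by blast
      have "\<rho> c1 c0 \<noteq> 0" using diff[OF c1(1) c0(1)] c0(2) c1(2) Nats_subset_Ints by (auto simp: \<mu>_def \<rho>_def)
      moreover have "0 \<le> \<rho> c1 c0"
        unfolding \<rho>_def using bcoord_nonneg_if_sumset[OF A_subset_hull r c0(1)] c1(1) .
      ultimately have "0 < bcoord (real (j c1)) (r c1) c0" by (simp add: \<rho>_def)
      then have "real h < real (card C) * (fact CARD('n) * measure lebesgue (convex hull C) - 2)"
        using diagonal_excess_bound[of j r h x c1 c0] j r above c1 c0(1) by (simp add: \<mu>_def \<rho>_def)
      then show ?thesis using h by simp
    qed
  qed
qed

lemma sumset_eq_Inter_translated_T_cones: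
  assumes "real (card C) * (fact CARD('n) * measure lebesgue (convex hull C) - 2) \<le> real h"
  shows "sumset h A = (\<Inter>c\<in>C. (\<lambda>t. real h *\<^sub>R c + t) ` T_cone A c)"
proof
  show "sumset h A \<subseteq> (\<Inter>c\<in>C. (\<lambda>t. real h *\<^sub>R c + t) ` T_cone A c)"
    by (intro INT_greatest sumset_subset_translated_T_cone)
  show "(\<Inter>c\<in>C. (\<lambda>t. real h *\<^sub>R c + t) ` T_cone A c) \<subseteq> sumset h A"
  proof
    fix x assume x: "x \<in> (\<Inter>c\<in>C. (\<lambda>t. real h *\<^sub>R c + t) ` T_cone A c)"
    show "x \<in> sumset h A"
    proof (rule mem_sumset_if_mem_vertex_cones[OF assms])
      fix c assume "c \<in> C"
      then show "\<exists>m. x + real m *\<^sub>R c \<in> sumset (h + m) A"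
        using x C_subset_A by (intro mem_translated_T_cone_imp) auto
    qed
  qed
qed

end

theorem theorem1p3:
  fixes A :: "(real ^ 'n) set" and h :: nat
  assumes "finite A"
    and "A \<subseteq> int_lattice"
    and "int_span {a - b | a b. a \<in> A \<and> b \<in> A} = int_lattice"
    and "int CARD('n) simplex (convex hull A)"
    and "real h \<ge> measure lebesgue (convex hull A) * fact (CARD('n) + 1) - 2 - 2 * real CARD('n)"
  shows "sumset h A =
    (\<Inter>v\<in>{v. v extreme_point_of (convex hull A)}.
        (\<lambda>t. real h *\<^sub>R v + t) ` T_cone A v)"
proof -
  obtain C where C: "\<not> affine_dependent C" "int (card C) = int CARD('n) + 1"
    "convex hull A = convex hull C"
    using assms(4) unfolding simplex_def by blast
  have vertices: "{v. v extreme_point_of (convex hull A)} = C"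
    using extreme_point_of_convex_hull_affine_independent[OF C(1)] C(3) by auto
  have "C \<subseteq> A" using extreme_point_of_convex_hull vertices by blast
  obtain v where "v \<in> C" using C(2) by fastforce
  interpret lattice_simplex C v A
    using aff_independent_finite[OF C(1)] C \<open>v \<in> C\<close> \<open>C \<subseteq> A\<close> hull_subset[of A convex] assms(2)
    by unfold_locales auto
  have "card C = Suc CARD('n)" using C(2) by simp
  then have "real (card C) * (fact CARD('n) * measure lebesgue (convex hull C) - 2) \<le> real h"
    using assms(5) C(3) by (simp add: algebra_simps)
  then show ?thesis unfolding vertices by (rule sumset_eq_Inter_translated_T_cones)
qed

end
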